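(* Let $n\geq1$ and let $F$ be a joint distribution of nonnegative lifetimes $X_1,\ldots,X_n$ with no ties. The following are equivalent: (a) $I_{\mathrm{BP}}^{(j)}=b_j$ for every $j\in[n]$ and every coherent structure function $\phi\in\Phi_n$; (b) the same for every semicoherent $\phi\in\Phi'_n$; (c) $q_j(A)=\frac{1}{n\binom{n-1}{|A|}}$ for every $j\in[n]$ and every $A\subseteq[n]\setminus\{j\}$.
   Context: Subsets of $[n]$ are identified with Boolean vectors. $\Phi'_n$ is the set of semicoherent structure functions $\phi:2^{[n]}\to\{0,1\}$: nondecreasing with $\phi(\varnothing)=0$, $\phi([n])=1$. $\Phi_n\subseteq\Phi'_n$ is the set of coherent ones: every variable is essential, i.e., for each $j$ there is $\mathbf{x}$ with $\phi(\mathbf{x})|_{x_j=0}\neq\phi(\mathbf{x})|_{x_j=1}$. No ties: $\Pr(X_i=X_k)=0$ for $i\neq k$. System lifetime $T=\inf\{t\geq0:\phi(\{i:X_i>t\})=0\}$; $I_{\mathrm{BP}}^{(j)}=\Pr(T=X_j)$ (depending on $\phi$ and $F$). $b_j=\sum_{A\subseteq[n]\setminus\{j\}}\frac{1}{n\binom{n-1}{|A|}}(\phi(A\cup\{j\})-\phi(A))$. $q_j(A)=\Pr\big(\max_{i\notin A\cup\{j\}}X_i<X_j<\min_{i\in A}X_i\big)$ (empty max $=-\infty$, empty min $=+\infty$). *)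

theory Defs
  imports "HOL-Probability.Probability"
begin

text \<open>Components are indexed by [n] = {1..n}; a state vector is identified with the
  set of working components (a subset of {1..n}); a structure function is a
  predicate on such sets (True = 1, False = 0).\<close>

definition semicoherent :: "nat \<Rightarrow> (nat set \<Rightarrow> bool) \<Rightarrow> bool" where
  "semicoherent n \<phi> \<longleftrightarrow>
     (\<forall>A B. A \<subseteq> B \<longrightarrow> B \<subseteq> {1..n} \<longrightarrow> (\<phi> A \<longrightarrow> \<phi> B))
     \<and> \<not> \<phi> {} \<and> \<phi> {1..n}"

definition coherent :: "nat \<Rightarrow> (nat set \<Rightarrow> bool) \<Rightarrow> bool" where
  "coherent n \<phi> \<longleftrightarrow> semicoherent n \<phi> \<and>
     (\<forall>j\<in>{1..n}. \<exists>x. x \<subseteq> {1..n} \<and> \<phi> (x - {j}) \<noteq> \<phi> (x \<union> {j}))"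

definition lifetime :: "nat \<Rightarrow> (nat set \<Rightarrow> bool) \<Rightarrow> (nat \<Rightarrow> 'a \<Rightarrow> real) \<Rightarrow> 'a \<Rightarrow> real" where
  "lifetime n \<phi> X \<omega> = Inf {t. 0 \<le> t \<and> \<not> \<phi> {i\<in>{1..n}. X i \<omega> > t}}"

definition I_BP :: "'a measure \<Rightarrow> nat \<Rightarrow> (nat set \<Rightarrow> bool) \<Rightarrow> (nat \<Rightarrow> 'a \<Rightarrow> real) \<Rightarrow> nat \<Rightarrow> real" where
  "I_BP M n \<phi> X j = measure M {\<omega> \<in> space M. lifetime n \<phi> X \<omega> = X j \<omega>}"

definition b_coef :: "nat \<Rightarrow> (nat set \<Rightarrow> bool) \<Rightarrow> nat \<Rightarrow> real" where
  "b_coef n \<phi> j = (\<Sum>A\<in>Pow ({1..n} - {j}).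
      1 / (real n * real ((n - 1) choose card A)) * (of_bool (\<phi> (A \<union> {j})) - of_bool (\<phi> A)))"

definition q_prob :: "'a measure \<Rightarrow> nat \<Rightarrow> (nat \<Rightarrow> 'a \<Rightarrow> real) \<Rightarrow> nat \<Rightarrow> nat set \<Rightarrow> real" where
  "q_prob M n X j A = measure M {\<omega> \<in> space M.
      (\<forall>i\<in>{1..n} - (A \<union> {j}). X i \<omega> < X j \<omega>) \<and> (\<forall>i\<in>A. X j \<omega> < X i \<omega>)}"

end

theory Submission
  imports Defs
begin

(* 1. Representation: for semicoherent phi the lifetime is the max-min expression
      max over path sets P of min over i in P of X_i.  Hence, on the "order event"
      E_j(A) where exactly the components of A outlive X_j, we have T = X_j iff
      j is critical for A, i.e. phi(A+j) holds and phi(A) fails.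
   2. Decomposition: since the order events are disjoint and (up to ties, which are
      null) cover the space, I_BP^(j) = sum_A q_j(A) * (phi(A+j) - phi(A)), while
      b_j is the same sum with weights 1/(n*binom(n-1,|A|)).
   3. Hence (c) implies (b), and (b) implies (a) trivially.  For (a) implies (c),
      the series system and the two-path systems {j}+C | W-C (W = [n]-{j}) are
      coherent; their marginal effects show that the sums of q_j - weight over the
      up-sets {A. C <= A} all vanish, and Moebius inversion over the finite Boolean
      lattice Pow W gives q_j(A) = weight(A). *)

section \<open>Structure functions\<close>

lemma semicoherent_mono:
  "semicoherent n \<phi> \<Longrightarrow> A \<subseteq> B \<Longrightarrow> B \<subseteq> {1..n} \<Longrightarrow> \<phi> A \<Longrightarrow> \<phi> B"
  unfolding semicoherent_def by blast

definition marginal :: "(nat set \<Rightarrow> bool) \<Rightarrow> nat \<Rightarrow> nat set \<Rightarrow> real" where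
  "marginal \<phi> j A = of_bool (\<phi> (A \<union> {j})) - of_bool (\<phi> A)"

definition bp_weight :: "nat \<Rightarrow> nat set \<Rightarrow> real" where
  "bp_weight n A = 1 / (real n * real ((n - 1) choose card A))"

lemma b_coef_marginal:
  "b_coef n \<phi> j = (\<Sum>A\<in>Pow ({1..n} - {j}). bp_weight n A * marginal \<phi> j A)"
  unfolding b_coef_def bp_weight_def marginal_def ..

lemma series_coherent: "1 \<le> n \<Longrightarrow> coherent n (\<lambda>x. {1..n} \<subseteq> x)"
  unfolding coherent_def semicoherent_def
proof (intro conjI ballI allI impI)
  fix j assume "j \<in> {1..n}"
  then show "\<exists>x. x \<subseteq> {1..n} \<and> ({1..n} \<subseteq> x - {j}) \<noteq> ({1..n} \<subseteq> x \<union> {j})"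
    by (intro exI[of _ "{1..n}"]) auto
qed auto

lemma marginal_series:
  assumes "j \<in> {1..n}" "A \<subseteq> {1..n} - {j}"
  shows "marginal (\<lambda>x. {1..n} \<subseteq> x) j A = of_bool (A = {1..n} - {j})"
proof -
  have "\<not> {1..n} \<subseteq> A" "{1..n} \<subseteq> A \<union> {j} \<longleftrightarrow> A = {1..n} - {j}"
    using assms by auto
  then show ?thesis unfolding marginal_def by simp
qed

lemma two_paths_coherent:
  assumes "B \<union> R = {1..n}" "B \<inter> R = {}" "B \<noteq> {}" "R \<noteq> {}"
  shows "coherent n (\<lambda>x. B \<subseteq> x \<or> R \<subseteq> x)"
  unfolding coherent_def semicoherent_def
proof (intro conjI ballI allI impI)
  fix j assume j: "j \<in> {1..n}"
  show "\<exists>x. x \<subseteq> {1..n} \<and> (B \<subseteq> x - {j} \<or> R \<subseteq> x - {j}) \<noteq> (B \<subseteq> x \<union> {j} \<or> R \<subseteq> x \<union> {j})"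
  proof (cases "j \<in> B")
    case True
    then show ?thesis using assms by (intro exI[of _ B]) auto
  next
    case False
    then have "j \<in> R" using j assms by auto
    then show ?thesis using assms by (intro exI[of _ R]) auto
  qed
qed (use assms in auto)

text \<open>For the two-path system with paths {j}+C and W-C, j is critical for A exactly when
  C \<subseteq> A, except for the state A = W in which the second path already works.\<close>
lemma marginal_two_paths:
  assumes W: "W = {1..n} - {j}" and "C \<subseteq> W" "A \<subseteq> W"
  shows "marginal (\<lambda>x. insert j C \<subseteq> x \<or> W - C \<subseteq> x) j A
         = of_bool (C \<subseteq> A) - of_bool (A = W)"
proof -
  have "\<not> insert j C \<subseteq> A" "insert j C \<subseteq> A \<union> {j} \<longleftrightarrow> C \<subseteq> A"
    "W - C \<subseteq> A \<union> {j} \<longleftrightarrow> W - C \<subseteq> A" "C \<subseteq> A \<and> W - C \<subseteq> A \<longleftrightarrow> A = W"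
    using assms by auto
  then show ?thesis unfolding marginal_def by auto
qed

section \<open>Moebius inversion on a Boolean lattice\<close>

lemma upset_sums_zero_imp_zero:
  fixes e :: "'b set \<Rightarrow> real"
  assumes fin: "finite W" and h: "\<And>C. C \<subseteq> W \<Longrightarrow> (\<Sum>A\<in>{A\<in>Pow W. C \<subseteq> A}. e A) = 0"
  shows "C \<subseteq> W \<Longrightarrow> e C = 0"
proof (induction C rule: measure_induct_rule[where f = "\<lambda>C. card (W - C)"])
  case (less C)
  have larger_zero: "(\<Sum>A\<in>{A\<in>Pow W. C \<subset> A}. e A) = 0"
  proof (rule sum.neutral, intro ballI)
    fix A assume A: "A \<in> {A\<in>Pow W. C \<subset> A}"
    then have "card (W - A) < card (W - C)"
      using fin less.prems by (intro psubset_card_mono) auto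
    then show "e A = 0" using less.IH A by auto
  qed
  have "{A\<in>Pow W. C \<subseteq> A} = insert C {A\<in>Pow W. C \<subset> A}" using less.prems by auto
  then have "(\<Sum>A\<in>{A\<in>Pow W. C \<subseteq> A}. e A) = e C + (\<Sum>A\<in>{A\<in>Pow W. C \<subset> A}. e A)"
    using fin by (simp add: sum.insert)
  then show ?case using h[OF less.prems] larger_zero by simp
qed

lemma coherent_marginals_separate:
  fixes e :: "nat set \<Rightarrow> real"
  assumes j: "j \<in> {1..n}"
    and orth: "\<And>\<phi>. coherent n \<phi> \<Longrightarrow> (\<Sum>A\<in>Pow ({1..n} - {j}). e A * marginal \<phi> j A) = 0"
    and C: "C \<subseteq> {1..n} - {j}"
  shows "e C = 0"
proof -
  define W where "W = {1..n} - {j}"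
  have finW: "finite W" unfolding W_def by auto
  have "(\<Sum>A\<in>Pow W. e A * marginal (\<lambda>x. {1..n} \<subseteq> x) j A) = (\<Sum>A\<in>Pow W. if A = W then e A else 0)"
  proof (rule sum.cong[OF refl])
    fix A assume "A \<in> Pow W"
    then show "e A * marginal (\<lambda>x. {1..n} \<subseteq> x) j A = (if A = W then e A else 0)"
      using marginal_series[OF j, of A] by (simp add: W_def)
  qed
  then have eW: "e W = 0"
    using orth[OF series_coherent] j finW by (simp add: W_def sum.delta')
  have "(\<Sum>A\<in>{A\<in>Pow W. C' \<subseteq> A}. e A) = 0" if C': "C' \<subseteq> W" for C'
  proof (cases "C' = W")
    case True
    then have "{A\<in>Pow W. C' \<subseteq> A} = {W}" by auto
    then show ?thesis using eW by simp
  next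
    case False
    have coh: "coherent n (\<lambda>x. insert j C' \<subseteq> x \<or> W - C' \<subseteq> x)"
      using C' False j by (intro two_paths_coherent) (auto simp: W_def)
    have "(\<Sum>A\<in>Pow W. e A * marginal (\<lambda>x. insert j C' \<subseteq> x \<or> W - C' \<subseteq> x) j A)
        = (\<Sum>A\<in>Pow W. (if C' \<subseteq> A then e A else 0) - (if A = W then e A else 0))"
    proof (rule sum.cong[OF refl])
      fix A assume "A \<in> Pow W"
      then show "e A * marginal (\<lambda>x. insert j C' \<subseteq> x \<or> W - C' \<subseteq> x) j A
          = (if C' \<subseteq> A then e A else 0) - (if A = W then e A else 0)"
        using marginal_two_paths[OF W_def C', of A] by simp
    qed
    also have "\<dots> = (\<Sum>A\<in>{A\<in>Pow W. C' \<subseteq> A}. e A) - e W"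
      using finW by (simp add: sum_subtractf sum.delta' sum.inter_filter[symmetric])
    finally show ?thesis using orth[OF coh] eW by (simp add: W_def)
  qed
  then show ?thesis using upset_sums_zero_imp_zero[OF finW] C unfolding W_def by blast
qed

section \<open>The lifetime as a max-min expression\<close>

definition maxmin_lifetime :: "nat \<Rightarrow> (nat set \<Rightarrow> bool) \<Rightarrow> (nat \<Rightarrow> 'a \<Rightarrow> real) \<Rightarrow> 'a \<Rightarrow> real" where
  "maxmin_lifetime n \<phi> X \<omega> = Max ((\<lambda>P. Min ((\<lambda>i. X i \<omega>) ` P)) ` {P. P \<subseteq> {1..n} \<and> \<phi> P})"

lemma maxmin_lifetime_char:
  assumes sc: "semicoherent n \<phi>" and nn: "\<forall>i\<in>{1..n}. 0 \<le> X i \<omega>"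
  shows "\<And>t. (\<not> \<phi> {i\<in>{1..n}. X i \<omega> > t}) \<longleftrightarrow> maxmin_lifetime n \<phi> X \<omega> \<le> t"
    and "lifetime n \<phi> X \<omega> = maxmin_lifetime n \<phi> X \<omega>"
proof -
  define Ps where "Ps = {P. P \<subseteq> {1..n} \<and> \<phi> P}"
  define V where "V = maxmin_lifetime n \<phi> X \<omega>"
  have fin: "finite Ps" unfolding Ps_def
    by (rule finite_subset[of _ "Pow {1..n}"]) auto
  have full: "{1..n} \<in> Ps" using sc unfolding Ps_def semicoherent_def by auto
  have ne: "\<And>P. P \<in> Ps \<Longrightarrow> P \<noteq> {} \<and> finite P" using sc unfolding Ps_def semicoherent_def
    by (auto intro: finite_subset)
  have V: "V = Max ((\<lambda>P. Min ((\<lambda>i. X i \<omega>) ` P)) ` Ps)"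
    unfolding V_def maxmin_lifetime_def Ps_def ..
  have le: "V \<le> t \<longleftrightarrow> (\<forall>P\<in>Ps. \<exists>i\<in>P. X i \<omega> \<le> t)" for t
  proof -
    have "V \<le> t \<longleftrightarrow> (\<forall>P\<in>Ps. Min ((\<lambda>i. X i \<omega>) ` P) \<le> t)"
      unfolding V using fin full by (subst Max_le_iff) auto
    also have "\<dots> \<longleftrightarrow> (\<forall>P\<in>Ps. \<exists>i\<in>P. X i \<omega> \<le> t)"
      using ne by (auto simp: Min_le_iff)
    finally show ?thesis .
  qed
  show down: "(\<not> \<phi> {i\<in>{1..n}. X i \<omega> > t}) \<longleftrightarrow> V \<le> t" for t
  proof
    assume h: "\<not> \<phi> {i\<in>{1..n}. X i \<omega> > t}"
    have "\<exists>i\<in>P. X i \<omega> \<le> t" if P: "P \<in> Ps" for P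
    proof (rule ccontr)
      assume "\<not> ?thesis"
      then have "P \<subseteq> {i\<in>{1..n}. X i \<omega> > t}" using P unfolding Ps_def by force
      then show False using h P semicoherent_mono[OF sc] unfolding Ps_def by blast
    qed
    then show "V \<le> t" unfolding le by blast
  next
    assume "V \<le> t"
    then have "{i\<in>{1..n}. X i \<omega> > t} \<notin> Ps" unfolding le by force
    then show "\<not> \<phi> {i\<in>{1..n}. X i \<omega> > t}" unfolding Ps_def by auto
  qed
  have "Min ((\<lambda>i. X i \<omega>) ` {1..n}) \<le> V" unfolding V
    using fin full by (intro Max_ge) auto
  moreover have "0 \<le> Min ((\<lambda>i. X i \<omega>) ` {1..n})" using ne[OF full] nn by simp
  ultimately have "{t. 0 \<le> t \<and> \<not> \<phi> {i\<in>{1..n}. X i \<omega> > t}} = {V..}"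
    using down by auto
  then show "lifetime n \<phi> X \<omega> = V" unfolding lifetime_def by simp
qed

text \<open>Measurability of the lifetime follows from its max-min representation.\<close>
lemma maxmin_lifetime_measurable:
  assumes "\<And>i. i \<in> {1..n} \<Longrightarrow> X i \<in> borel_measurable M"
  shows "maxmin_lifetime n \<phi> X \<in> borel_measurable M"
  unfolding maxmin_lifetime_def[abs_def]
proof (rule borel_measurable_Max)
  show "finite {P. P \<subseteq> {1..n} \<and> \<phi> P}"
    by (rule finite_subset[of _ "Pow {1..n}"]) auto
  fix P assume "P \<in> {P. P \<subseteq> {1..n} \<and> \<phi> P}"
  then show "(\<lambda>\<omega>. Min ((\<lambda>i. X i \<omega>) ` P)) \<in> borel_measurable M"
    using assms by (intro borel_measurable_Min) (auto intro: finite_subset)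
qed

section \<open>Order events\<close>

definition order_event :: "'a measure \<Rightarrow> nat \<Rightarrow> (nat \<Rightarrow> 'a \<Rightarrow> real) \<Rightarrow> nat \<Rightarrow> nat set \<Rightarrow> 'a set" where
  "order_event M n X j A = {\<omega> \<in> space M.
      (\<forall>i\<in>{1..n} - (A \<union> {j}). X i \<omega> < X j \<omega>) \<and> (\<forall>i\<in>A. X j \<omega> < X i \<omega>)}"

lemma q_prob_order_event: "q_prob M n X j A = measure M (order_event M n X j A)"
  unfolding q_prob_def order_event_def ..

lemma order_event_sets:
  assumes "\<And>i. i \<in> {1..n} \<Longrightarrow> X i \<in> borel_measurable M" "j \<in> {1..n}" "A \<subseteq> {1..n}"
  shows "order_event M n X j A \<in> sets M"
  unfolding order_event_def using assms
  by (intro sets.sets_Collect_conj sets.sets_Collect_finite_All borel_measurable_less)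
     (auto intro: finite_subset)

lemma order_event_unique:
  assumes "A \<subseteq> {1..n} - {j}" "\<omega> \<in> order_event M n X j A"
  shows "A = {i\<in>{1..n} - {j}. X j \<omega> < X i \<omega>}"
proof (intro set_eqI iffI)
  fix i assume "i \<in> A"
  then show "i \<in> {i\<in>{1..n} - {j}. X j \<omega> < X i \<omega>}"
    using assms unfolding order_event_def by auto
next
  fix i assume i: "i \<in> {i\<in>{1..n} - {j}. X j \<omega> < X i \<omega>}"
  show "i \<in> A"
  proof (rule ccontr)
    assume "i \<notin> A"
    then have "X i \<omega> < X j \<omega>" using i assms(2) unfolding order_event_def by auto
    then show False using i by auto
  qed
qed

lemma order_event_cover:
  assumes "\<omega> \<in> space M" "j \<in> {1..n}" "\<forall>i\<in>{1..n}. i \<noteq> j \<longrightarrow> X i \<omega> \<noteq> X j \<omega>"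
  shows "\<omega> \<in> order_event M n X j {i\<in>{1..n} - {j}. X j \<omega> < X i \<omega>}"
proof -
  have "X i \<omega> < X j \<omega>" if "i \<in> {1..n}" "i \<noteq> j" "\<not> X j \<omega> < X i \<omega>" for i
    using assms(3) that by force
  then have "\<forall>i\<in>{1..n} - ({i\<in>{1..n} - {j}. X j \<omega> < X i \<omega>} \<union> {j}). X i \<omega> < X j \<omega>"
    by blast
  then show ?thesis using assms(1) unfolding order_event_def by blast
qed

lemma lifetime_on_order_event:
  assumes sc: "semicoherent n \<phi>" and nn: "\<forall>i\<in>{1..n}. 0 \<le> X i \<omega>"
    and j: "j \<in> {1..n}" and A: "A \<subseteq> {1..n} - {j}"
    and below: "\<forall>i\<in>{1..n} - (A \<union> {j}). X i \<omega> < X j \<omega>"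
    and above: "\<forall>i\<in>A. X j \<omega> < X i \<omega>"
  shows "lifetime n \<phi> X \<omega> = X j \<omega> \<longleftrightarrow> \<phi> (A \<union> {j}) \<and> \<not> \<phi> A"
proof -
  note down = maxmin_lifetime_char(1)[of n \<phi> X \<omega>, OF sc nn]
  define V where "V = maxmin_lifetime n \<phi> X \<omega>"
  have "{i\<in>{1..n}. X i \<omega> > X j \<omega>} = A"
  proof (intro set_eqI iffI)
    fix i assume i: "i \<in> {i\<in>{1..n}. X i \<omega> > X j \<omega>}"
    show "i \<in> A"
    proof (rule ccontr)
      assume "i \<notin> A"
      then have "i \<in> {1..n} - (A \<union> {j})" using i by auto
      then have "X i \<omega> < X j \<omega>" using below by blast
      then show False using i by auto
    qed
  qed (use A above in auto)
  then have le: "V \<le> X j \<omega> \<longleftrightarrow> \<not> \<phi> A" using down[of "X j \<omega>"] V_def by simp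
  have less: "V < X j \<omega> \<longleftrightarrow> \<not> \<phi> (A \<union> {j})"
  proof
    assume "V < X j \<omega>"
    then have "A \<union> {j} \<subseteq> {i\<in>{1..n}. X i \<omega> > V}" using A j above by auto
    moreover have "\<not> \<phi> {i\<in>{1..n}. X i \<omega> > V}" using down[of V] V_def by simp
    ultimately show "\<not> \<phi> (A \<union> {j})" using semicoherent_mono[OF sc] by blast
  next
    assume np: "\<not> \<phi> (A \<union> {j})"
    define L where "L = {1..n} - (A \<union> {j})"
    have "L \<noteq> {}"
    proof
      assume "L = {}"
      then have "A \<union> {j} = {1..n}" using A j unfolding L_def by auto
      then show False using np sc unfolding semicoherent_def by auto
    qed
    have "finite L" unfolding L_def by auto
    define t where "t = Max ((\<lambda>i. X i \<omega>) ` L)"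
    have t_less: "t < X j \<omega>"
      using below \<open>L \<noteq> {}\<close> \<open>finite L\<close> unfolding t_def L_def by (auto simp: Max_less_iff)
    have "X i \<omega> \<le> t" if "i \<in> L" for i
      unfolding t_def using \<open>finite L\<close> that by auto
    then have "{i\<in>{1..n}. X i \<omega> > t} \<subseteq> A \<union> {j}"
      unfolding L_def by force
    then have "\<not> \<phi> {i\<in>{1..n}. X i \<omega> > t}" using np semicoherent_mono[OF sc] A j by blast
    then have "V \<le> t" using down[of t] V_def by simp
    then show "V < X j \<omega>" using t_less by simp
  qed
  have "lifetime n \<phi> X \<omega> = V" using maxmin_lifetime_char(2)[of n \<phi> X \<omega>, OF sc nn] V_def by simp
  then show ?thesis using le less by auto
qed

section \<open>Decomposition of the Barlow--Proschan index\<close>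

lemma AE_no_ties:
  fixes X :: "nat \<Rightarrow> 'a \<Rightarrow> real"
  assumes meas: "\<And>i. i \<in> {1..n} \<Longrightarrow> X i \<in> borel_measurable M"
    and ties: "\<And>i k. i \<in> {1..n} \<Longrightarrow> k \<in> {1..n} \<Longrightarrow> i \<noteq> k \<Longrightarrow>
           measure M {\<omega> \<in> space M. X i \<omega> = X k \<omega>} = 0"
    and fin: "finite_measure M"
  shows "AE \<omega> in M. \<forall>i\<in>{1..n}. \<forall>k\<in>{1..n}. i \<noteq> k \<longrightarrow> X i \<omega> \<noteq> X k \<omega>"
proof (intro AE_finite_allI finite_atLeastAtMost)
  fix i k assume ik: "i \<in> {1..n}" "k \<in> {1..n}"
  show "AE \<omega> in M. i \<noteq> k \<longrightarrow> X i \<omega> \<noteq> X k \<omega>"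
  proof (cases "i = k")
    case False
    have N: "{\<omega> \<in> space M. X i \<omega> = X k \<omega>} \<in> sets M" using ik by (intro borel_measurable_eq meas)
    then have "emeasure M {\<omega> \<in> space M. X i \<omega> = X k \<omega>} = 0"
      using ties[OF ik False] by (simp add: finite_measure.emeasure_eq_measure[OF fin])
    then have "AE \<omega> in M. X i \<omega> \<noteq> X k \<omega>"
      using AE_iff_measurable[OF N] by auto
    then show ?thesis by auto
  qed simp
qed

lemma AE_lifetime_eq_iff_critical:
  assumes meas: "\<And>i. i \<in> {1..n} \<Longrightarrow> X i \<in> borel_measurable M"
    and nn: "\<And>i \<omega>. i \<in> {1..n} \<Longrightarrow> \<omega> \<in> space M \<Longrightarrow> 0 \<le> X i \<omega>"
    and ties: "\<And>i k. i \<in> {1..n} \<Longrightarrow> k \<in> {1..n} \<Longrightarrow> i \<noteq> k \<Longrightarrow>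
           measure M {\<omega> \<in> space M. X i \<omega> = X k \<omega>} = 0"
    and fin: "finite_measure M" and sc: "semicoherent n \<phi>" and j: "j \<in> {1..n}"
  shows "AE \<omega> in M. lifetime n \<phi> X \<omega> = X j \<omega> \<longleftrightarrow>
           \<omega> \<in> (\<Union>A\<in>{A\<in>Pow ({1..n} - {j}). \<phi> (A \<union> {j}) \<and> \<not> \<phi> A}. order_event M n X j A)"
proof -
  have "AE \<omega> in M. \<forall>i\<in>{1..n}. \<forall>k\<in>{1..n}. i \<noteq> k \<longrightarrow> X i \<omega> \<noteq> X k \<omega>"
    using meas ties fin by (rule AE_no_ties)
  with AE_space show ?thesis
  proof eventually_elim
    case (elim \<omega>)
    define A0 where "A0 = {i\<in>{1..n} - {j}. X j \<omega> < X i \<omega>}"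
    have A0: "A0 \<subseteq> {1..n} - {j}" unfolding A0_def by auto
    have in_A0: "\<omega> \<in> order_event M n X j A0"
      unfolding A0_def by (rule order_event_cover) (use elim j in auto)
    then have below: "\<forall>i\<in>{1..n} - (A0 \<union> {j}). X i \<omega> < X j \<omega>"
      and above: "\<forall>i\<in>A0. X j \<omega> < X i \<omega>"
      unfolding order_event_def by auto
    have "\<forall>i\<in>{1..n}. 0 \<le> X i \<omega>" using nn elim(1) by auto
    note critical = lifetime_on_order_event[of n \<phi> X \<omega> j A0, OF sc this j A0 below above]
    have unique: "A = A0" if "A \<subseteq> {1..n} - {j}" "\<omega> \<in> order_event M n X j A" for A
      unfolding A0_def using that by (rule order_event_unique)
    show ?case
    proof
      assume "lifetime n \<phi> X \<omega> = X j \<omega>"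
      then have "A0 \<in> {A\<in>Pow ({1..n} - {j}). \<phi> (A \<union> {j}) \<and> \<not> \<phi> A}"
        using critical A0 by auto
      then show "\<omega> \<in> (\<Union>A\<in>{A\<in>Pow ({1..n} - {j}). \<phi> (A \<union> {j}) \<and> \<not> \<phi> A}. order_event M n X j A)"
        using in_A0 by blast
    next
      assume "\<omega> \<in> (\<Union>A\<in>{A\<in>Pow ({1..n} - {j}). \<phi> (A \<union> {j}) \<and> \<not> \<phi> A}. order_event M n X j A)"
      then obtain A where "A \<subseteq> {1..n} - {j}" "\<phi> (A \<union> {j}) \<and> \<not> \<phi> A" "\<omega> \<in> order_event M n X j A"
        by auto
      then show "lifetime n \<phi> X \<omega> = X j \<omega>" using unique critical by blast
    qed
  qed
qed

lemma I_BP_decomposition: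
  assumes P: "prob_space M"
    and meas: "\<And>i. i \<in> {1..n} \<Longrightarrow> X i \<in> borel_measurable M"
    and nn: "\<And>i \<omega>. i \<in> {1..n} \<Longrightarrow> \<omega> \<in> space M \<Longrightarrow> 0 \<le> X i \<omega>"
    and ties: "\<And>i k. i \<in> {1..n} \<Longrightarrow> k \<in> {1..n} \<Longrightarrow> i \<noteq> k \<Longrightarrow>
           measure M {\<omega> \<in> space M. X i \<omega> = X k \<omega>} = 0"
    and sc: "semicoherent n \<phi>" and j: "j \<in> {1..n}"
  shows "I_BP M n \<phi> X j = (\<Sum>A\<in>Pow ({1..n} - {j}). q_prob M n X j A * marginal \<phi> j A)"
proof -
  interpret prob_space M by (rule P)
  define W where "W = {1..n} - {j}"
  define E where "E = order_event M n X j"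
  define G where "G = {A\<in>Pow W. \<phi> (A \<union> {j}) \<and> \<not> \<phi> A}"
  have finW: "finite W" unfolding W_def by auto
  then have finG: "finite G" unfolding G_def by auto
  have E_sets: "E A \<in> sets M" if "A \<in> G" for A
    using that meas j unfolding E_def G_def W_def by (intro order_event_sets) auto
  have "lifetime n \<phi> X \<omega> = maxmin_lifetime n \<phi> X \<omega>" if "\<omega> \<in> space M" for \<omega>
    using maxmin_lifetime_char(2)[of n \<phi> X \<omega>, OF sc] nn that by auto
  then have "{\<omega> \<in> space M. lifetime n \<phi> X \<omega> = X j \<omega>}
      = {\<omega> \<in> space M. maxmin_lifetime n \<phi> X \<omega> = X j \<omega>}"
    by auto
  also have "\<dots> \<in> sets M"
    by (intro borel_measurable_eq maxmin_lifetime_measurable meas j)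
  finally have T_sets: "{\<omega> \<in> space M. lifetime n \<phi> X \<omega> = X j \<omega>} \<in> sets M" .
  have disj: "disjoint_family_on E G"
    unfolding disjoint_family_on_def
  proof (intro ballI impI)
    fix A B assume AB: "A \<in> G" "B \<in> G" "A \<noteq> B"
    have "\<omega> \<notin> E A" if "\<omega> \<in> E B" for \<omega>
      using order_event_unique[of A n j \<omega> M X] order_event_unique[of B n j \<omega> M X] that AB
      unfolding E_def G_def W_def by auto
    then show "E A \<inter> E B = {}" by blast
  qed
  have "AE \<omega> in M. lifetime n \<phi> X \<omega> = X j \<omega> \<longleftrightarrow> \<omega> \<in> (\<Union>A\<in>G. E A)"
    unfolding E_def G_def W_def using meas nn ties finite_measure_axioms sc j
    by (rule AE_lifetime_eq_iff_critical)
  with AE_space have "AE \<omega> in M. \<omega> \<in> {\<omega> \<in> space M. lifetime n \<phi> X \<omega> = X j \<omega>}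
      \<longleftrightarrow> \<omega> \<in> (\<Union>A\<in>G. E A)"
    by eventually_elim simp
  then have "I_BP M n \<phi> X j = measure M (\<Union>A\<in>G. E A)"
    unfolding I_BP_def using T_sets finG E_sets by (intro measure_eq_AE) auto
  also have "\<dots> = (\<Sum>A\<in>G. measure M (E A))"
    using finG E_sets disj by (intro measure_finite_Union) (auto simp: emeasure_eq_measure)
  also have "\<dots> = (\<Sum>A\<in>Pow W. q_prob M n X j A * marginal \<phi> j A)"
  proof -
    have "(\<Sum>A\<in>G. measure M (E A))
        = (\<Sum>A\<in>Pow W. if \<phi> (A \<union> {j}) \<and> \<not> \<phi> A then measure M (E A) else 0)"
      unfolding G_def using finW by (subst sum.inter_filter) auto
    also have "\<dots> = (\<Sum>A\<in>Pow W. q_prob M n X j A * marginal \<phi> j A)"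
    proof (rule sum.cong[OF refl])
      fix A assume "A \<in> Pow W"
      then have "\<phi> A \<Longrightarrow> \<phi> (A \<union> {j})"
        using j semicoherent_mono[OF sc, of A "A \<union> {j}"] unfolding W_def by auto
      then show "(if \<phi> (A \<union> {j}) \<and> \<not> \<phi> A then measure M (E A) else 0)
          = q_prob M n X j A * marginal \<phi> j A"
        unfolding q_prob_order_event E_def marginal_def by auto
    qed
    finally show ?thesis .
  qed
  finally show ?thesis unfolding W_def .
qed

theorem proposition9:
  fixes M :: "'a measure" and X :: "nat \<Rightarrow> 'a \<Rightarrow> real" and n :: nat
  assumes "prob_space M"
    and "n \<ge> 1"
    and "\<And>i. i \<in> {1..n} \<Longrightarrow> X i \<in> borel_measurable M"
    and "\<And>i \<omega>. i \<in> {1..n} \<Longrightarrow> \<omega> \<in> space M \<Longrightarrow> 0 \<le> X i \<omega>"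
    and "\<And>i k. i \<in> {1..n} \<Longrightarrow> k \<in> {1..n} \<Longrightarrow> i \<noteq> k \<Longrightarrow>
           measure M {\<omega> \<in> space M. X i \<omega> = X k \<omega>} = 0"
  shows "((\<forall>\<phi>. coherent n \<phi> \<longrightarrow> (\<forall>j\<in>{1..n}. I_BP M n \<phi> X j = b_coef n \<phi> j))
          \<longleftrightarrow> (\<forall>\<phi>. semicoherent n \<phi> \<longrightarrow> (\<forall>j\<in>{1..n}. I_BP M n \<phi> X j = b_coef n \<phi> j)))
       \<and> ((\<forall>\<phi>. semicoherent n \<phi> \<longrightarrow> (\<forall>j\<in>{1..n}. I_BP M n \<phi> X j = b_coef n \<phi> j))
          \<longleftrightarrow> (\<forall>j\<in>{1..n}. \<forall>A. A \<subseteq> {1..n} - {j} \<longrightarrow>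
                 q_prob M n X j A = 1 / (real n * real ((n - 1) choose card A))))"
proof -
  have decomp: "I_BP M n \<phi> X j - b_coef n \<phi> j
      = (\<Sum>A\<in>Pow ({1..n} - {j}). (q_prob M n X j A - bp_weight n A) * marginal \<phi> j A)"
    if "semicoherent n \<phi>" "j \<in> {1..n}" for \<phi> j
    using I_BP_decomposition[OF assms(1,3,4,5) that] b_coef_marginal[of n \<phi> j]
    by (simp add: left_diff_distrib sum_subtractf)
  define Ic where "Ic = (\<forall>j\<in>{1..n}. \<forall>A. A \<subseteq> {1..n} - {j} \<longrightarrow> q_prob M n X j A = bp_weight n A)"
  have c_imp_b: "I_BP M n \<phi> X j = b_coef n \<phi> j" if Ic "semicoherent n \<phi>" "j \<in> {1..n}" for \<phi> j
    using decomp[OF that(2,3)] that(1,3) unfolding Ic_def by (simp add: sum.neutral)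
  have a_imp_c: Ic if a: "\<forall>\<phi>. coherent n \<phi> \<longrightarrow> (\<forall>j\<in>{1..n}. I_BP M n \<phi> X j = b_coef n \<phi> j)"
    unfolding Ic_def
  proof (intro ballI allI impI)
    fix j A assume j: "j \<in> {1..n}" and A: "A \<subseteq> {1..n} - {j}"
    have "(\<Sum>A\<in>Pow ({1..n} - {j}). (q_prob M n X j A - bp_weight n A) * marginal \<phi> j A) = 0"
      if "coherent n \<phi>" for \<phi>
      using decomp[of \<phi> j] a that j unfolding coherent_def by auto
    then have "q_prob M n X j A - bp_weight n A = 0"
      by (rule coherent_marginals_separate[where e = "\<lambda>A. q_prob M n X j A - bp_weight n A", OF j _ A])
    then show "q_prob M n X j A = bp_weight n A" by simp
  qed
  show ?thesis using c_imp_b a_imp_c unfolding coherent_def Ic_def bp_weight_def by blast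
qed

end
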